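(* Let $m\ge 3$ and let $l_1\le\cdots\le l_m$ be natural numbers with $l_1\ge 2$ and $l_2\ge 4$. Then $[\Theta(l_1,\ldots,l_m)]^2$ is equitably $k$-choosable for every $k\ge m+3$.
   Context: All graphs are finite and simple. $\Theta(l_1,\ldots,l_m)$ denotes the graph consisting of two vertices $u,w$ joined by $m$ internally disjoint paths of lengths $l_1,\ldots,l_m$; the $i$th path is $u, v_{i,1},\ldots,v_{i,l_i-1}, w$. For a graph $H$, $H^2$ has vertex set $V(H)$ with two vertices adjacent iff their distance in $H$ is 1 or 2. A $k$-assignment $L$ assigns to each vertex a set of exactly $k$ colors; an equitable $L$-coloring of $G$ is a proper coloring $f$ with $f(v)\in L(v)$ such that no color is used more than $\lceil |V(G)|/k\rceil$ times; $G$ is equitably $k$-choosable if it has an equitable $L$-coloring for every $k$-assignment $L$. *)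

theory Defs
  imports Complex_Main
begin

(* Simple graphs given by a vertex set V and an adjacency relation E
   (assumed symmetric and irreflexive where relevant). *)

definition square_adj :: "('a \<Rightarrow> 'a \<Rightarrow> bool) \<Rightarrow> 'a \<Rightarrow> 'a \<Rightarrow> bool" where
  "square_adj E x y \<longleftrightarrow> x \<noteq> y \<and> (E x y \<or> (\<exists>z. E x z \<and> E z y))"

definition k_assignment :: "'a set \<Rightarrow> nat \<Rightarrow> ('a \<Rightarrow> 'c set) \<Rightarrow> bool" where
  "k_assignment V k L \<longleftrightarrow> (\<forall>v\<in>V. finite (L v) \<and> card (L v) = k)"

definition equitable_L_coloring ::
  "'a set \<Rightarrow> ('a \<Rightarrow> 'a \<Rightarrow> bool) \<Rightarrow> nat \<Rightarrow> ('a \<Rightarrow> 'c set) \<Rightarrow> ('a \<Rightarrow> 'c) \<Rightarrow> bool" where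
  "equitable_L_coloring V E k L f \<longleftrightarrow>
     (\<forall>v\<in>V. f v \<in> L v) \<and>
     (\<forall>x\<in>V. \<forall>y\<in>V. E x y \<longrightarrow> f x \<noteq> f y) \<and>
     (\<forall>c. card {v\<in>V. f v = c} \<le> nat \<lceil>real (card V) / real k\<rceil>)"

definition equitably_choosable :: "'a set \<Rightarrow> ('a \<Rightarrow> 'a \<Rightarrow> bool) \<Rightarrow> nat \<Rightarrow> 'c itself \<Rightarrow> bool" where
  "equitably_choosable V E k (_ :: 'c itself) \<longleftrightarrow>
     (\<forall>L :: 'a \<Rightarrow> 'c set. k_assignment V k L \<longrightarrow> (\<exists>f. equitable_L_coloring V E k L f))"

(* Theta graphs.  Paths are indexed 0..m-1, lengths given by the list ls
   (ls ! i is the length of the (i+1)-st path). *)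
datatype theta_vertex = TU | TW | TV nat nat

definition theta_vertices :: "nat list \<Rightarrow> theta_vertex set" where
  "theta_vertices ls = {TU, TW} \<union> {TV i j | i j. i < length ls \<and> 1 \<le> j \<and> j < ls ! i}"

definition theta_pt :: "nat list \<Rightarrow> nat \<Rightarrow> nat \<Rightarrow> theta_vertex" where
  "theta_pt ls i j = (if j = 0 then TU else if j = ls ! i then TW else TV i j)"

definition theta_adj :: "nat list \<Rightarrow> theta_vertex \<Rightarrow> theta_vertex \<Rightarrow> bool" where
  "theta_adj ls x y \<longleftrightarrow> (\<exists>i<length ls. \<exists>j<ls ! i.
      (x = theta_pt ls i j \<and> y = theta_pt ls i (Suc j)) \<or>
      (y = theta_pt ls i j \<and> x = theta_pt ls i (Suc j)))"

end

(*
  Split the vertices into layers of at most k vertices each. A proper list colouring that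
  uses every colour at most once per layer is equitable, since there are at most
  ceil(n / k) layers. Such a colouring is found greedily, taking the layers from the top
  down and each layer by decreasing number of neighbours in higher layers: the greedy step
  at v succeeds as long as the vertices of its layer with at least as many upper neighbours
  as v, together with those upper neighbours, number at most k.

  In the square of a theta graph, layer 0 takes the vertices around u plus two more on
  path 1, layer 1 the vertices around w plus two more on path 2, and the remaining inner
  vertices fill the layers consecutively, walking backwards through the paths. An inner
  vertex then has at most two upper neighbours, both among the next two inner vertices, and
  the special vertices of large degree sit in layers with enough vertices of small degree.
*)

theory Submission
  imports Defs "HOL-Library.Product_Lexorder"
begin

section \<open>Equitable colouring by layers\<close>

lemma greedy_list_coloring:
  fixes r :: "'a \<Rightarrow> 'b::linorder"
  assumes "finite V"
    and sym: "\<And>x y. R x y \<Longrightarrow> R y x"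
    and L: "k_assignment V k L"
    and few: "\<And>x. x \<in> V \<Longrightarrow> card {y\<in>V. y \<noteq> x \<and> R x y \<and> r y \<le> r x} < k"
  shows "\<exists>f. (\<forall>v\<in>V. f v \<in> L v) \<and> (\<forall>x\<in>V. \<forall>y\<in>V. x \<noteq> y \<and> R x y \<longrightarrow> f x \<noteq> f y)"
proof -
  have "S \<subseteq> V \<longrightarrow> (\<exists>f. (\<forall>v\<in>S. f v \<in> L v) \<and> (\<forall>x\<in>S. \<forall>y\<in>S. x \<noteq> y \<and> R x y \<longrightarrow> f x \<noteq> f y))"
    if "finite S" for S
    using that
  proof (induction S rule: finite_ranking_induct[where f = r])
    case empty
    show ?case by simp
  next
    case (insert x S)
    show ?case
    proof
      assume xS: "insert x S \<subseteq> V"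
      with insert.IH obtain f where f: "\<forall>v\<in>S. f v \<in> L v" "\<forall>a\<in>S. \<forall>b\<in>S. a \<noteq> b \<and> R a b \<longrightarrow> f a \<noteq> f b"
        by blast
      define N where "N = {y\<in>S. y \<noteq> x \<and> R x y}"
      have xV: "x \<in> V" and SV: "S \<subseteq> V" using xS by auto
      have N_sub: "N \<subseteq> {y\<in>V. y \<noteq> x \<and> R x y \<and> r y \<le> r x}"
        using SV insert.hyps(2) unfolding N_def by auto
      have "card N < k"
        using card_mono[OF _ N_sub] few[OF xV] \<open>finite V\<close> by simp
      then have "card (f ` N) < card (L x)"
        using L xV card_image_le[of N f] insert.hyps(1) unfolding k_assignment_def N_def by fastforce
      then have "\<not> L x \<subseteq> f ` N"
        using card_mono[of "f ` N" "L x"] insert.hyps(1) unfolding N_def by fastforce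
      then obtain col where col: "col \<in> L x" "col \<notin> f ` N" by blast
      define g where "g = f(x := col)"
      have "g a \<noteq> g b" if "a \<in> insert x S" "b \<in> insert x S" "a \<noteq> b" "R a b" for a b
      proof (cases "a = x \<or> b = x")
        case True
        then have "g a = col \<and> g b \<in> f ` N \<or> g b = col \<and> g a \<in> f ` N"
          using that sym insert.hyps(1) unfolding g_def N_def by (cases "a = x") auto
        then show ?thesis using col by (metis imageI)
      next
        case False
        then show ?thesis using that f(2) unfolding g_def by auto
      qed
      moreover have "\<forall>v\<in>insert x S. g v \<in> L v" using f(1) col unfolding g_def by auto
      ultimately show "\<exists>g. (\<forall>v\<in>insert x S. g v \<in> L v) \<and>
              (\<forall>a\<in>insert x S. \<forall>b\<in>insert x S. a \<noteq> b \<and> R a b \<longrightarrow> g a \<noteq> g b)"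
        by blast
    qed
  qed
  then show ?thesis using \<open>finite V\<close> by blast
qed

lemma card_colour_class_le_if_inj_on_layers:
  fixes c :: "'a \<Rightarrow> nat"
  assumes "0 < k"
    and inj: "\<And>x y. x \<in> V \<Longrightarrow> y \<in> V \<Longrightarrow> x \<noteq> y \<Longrightarrow> c x = c y \<Longrightarrow> f x \<noteq> f y"
    and layers: "\<And>v. v \<in> V \<Longrightarrow> k * c v < card V"
  shows "card {v\<in>V. f v = col} \<le> nat \<lceil>real (card V) / real k\<rceil>"
proof -
  have "c ` {v\<in>V. f v = col} \<subseteq> {..< nat \<lceil>real (card V) / real k\<rceil>}"
  proof
    fix t assume "t \<in> c ` {v\<in>V. f v = col}"
    then have "real k * real t < real (card V)" using layers by (auto simp flip: of_nat_mult)
    then have "real t < real (card V) / real k" using \<open>0 < k\<close> by (simp add: field_simps)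
    also have "\<dots> \<le> of_int \<lceil>real (card V) / real k\<rceil>" by (rule le_of_int_ceiling)
    finally have "int t < \<lceil>real (card V) / real k\<rceil>" by linarith
    then show "t \<in> {..< nat \<lceil>real (card V) / real k\<rceil>}" by simp
  qed
  moreover have "inj_on c {v\<in>V. f v = col}" unfolding inj_on_def using inj by blast
  ultimately show ?thesis using card_inj_on_le[of c _ "{..< nat \<lceil>real (card V) / real k\<rceil>}"] by simp
qed

definition upper_degree :: "'a set \<Rightarrow> ('a \<Rightarrow> 'a \<Rightarrow> bool) \<Rightarrow> ('a \<Rightarrow> nat) \<Rightarrow> 'a \<Rightarrow> nat" where
  "upper_degree V E c v = card {x\<in>V. E v x \<and> c v < c x}"

lemma equitable_coloring_by_layers:
  fixes c :: "'a \<Rightarrow> nat"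
  assumes "finite V" "0 < k"
    and sym: "\<And>x y. E x y \<Longrightarrow> E y x" and irrefl: "\<And>x. \<not> E x x"
    and L: "k_assignment V k L"
    and layers: "\<And>v. v \<in> V \<Longrightarrow> k * c v < card V"
    and room: "\<And>v. v \<in> V \<Longrightarrow>
      card {y\<in>V. c y = c v \<and> upper_degree V E c v \<le> upper_degree V E c y} + upper_degree V E c v \<le> k"
  shows "\<exists>f. equitable_L_coloring V E k L f"
proof -
  define d where "d = upper_degree V E c"
  \<comment> \<open>Colour higher layers first, and within a layer by decreasing upper degree.\<close>
  define r where "r v = (- int (c v), - int (d v))" for v
  define R where "R x y \<longleftrightarrow> E x y \<or> c x = c y" for x y
  have r_le: "r y \<le> r x \<longleftrightarrow> c x < c y \<or> c x = c y \<and> d x \<le> d y" for x y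
    unfolding r_def by (auto simp: less_eq_prod_def)
  have "card {y\<in>V. y \<noteq> x \<and> R x y \<and> r y \<le> r x} < k" if x: "x \<in> V" for x
  proof -
    have "{y\<in>V. y \<noteq> x \<and> R x y \<and> r y \<le> r x}
        \<subseteq> {y\<in>V. E x y \<and> c x < c y} \<union> ({y\<in>V. c y = c x \<and> d x \<le> d y} - {x})"
      unfolding R_def r_le by auto
    then have "card {y\<in>V. y \<noteq> x \<and> R x y \<and> r y \<le> r x}
        \<le> card ({y\<in>V. E x y \<and> c x < c y} \<union> ({y\<in>V. c y = c x \<and> d x \<le> d y} - {x}))"
      using \<open>finite V\<close> by (intro card_mono) auto
    also have "\<dots> \<le> card {y\<in>V. E x y \<and> c x < c y} + card ({y\<in>V. c y = c x \<and> d x \<le> d y} - {x})"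
      by (rule card_Un_le)
    also have "\<dots> = d x + (card {y\<in>V. c y = c x \<and> d x \<le> d y} - 1)"
      using x \<open>finite V\<close> unfolding d_def upper_degree_def by simp
    also have "\<dots> < k"
      using room[OF x] x \<open>finite V\<close> card_gt_0_iff[of "{y\<in>V. c y = c x \<and> d x \<le> d y}"]
      unfolding d_def by fastforce
    finally show ?thesis .
  qed
  moreover have "R x y \<Longrightarrow> R y x" for x y unfolding R_def using sym by auto
  ultimately obtain f where f: "\<forall>v\<in>V. f v \<in> L v" "\<forall>x\<in>V. \<forall>y\<in>V. x \<noteq> y \<and> R x y \<longrightarrow> f x \<noteq> f y"
    using greedy_list_coloring[OF \<open>finite V\<close> _ L, of R r] by blast
  have "card {v\<in>V. f v = col} \<le> nat \<lceil>real (card V) / real k\<rceil>" for col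
    using f(2) by (intro card_colour_class_le_if_inj_on_layers[OF \<open>0 < k\<close> _ layers]) (auto simp: R_def)
  moreover have "\<forall>x\<in>V. \<forall>y\<in>V. E x y \<longrightarrow> f x \<noteq> f y" using f(2) irrefl unfolding R_def by metis
  ultimately show ?thesis unfolding equitable_L_coloring_def using f(1) by blast
qed

section \<open>Ranks in a finite set\<close>

definition rank_above :: "'a set \<Rightarrow> ('a \<Rightarrow> nat) \<Rightarrow> 'a \<Rightarrow> nat" where
  "rank_above A p x = card {y\<in>A. p x < p y}"

lemma rank_above_lt_card:
  assumes "finite A" "x \<in> A"
  shows "rank_above A p x < card A"
  unfolding rank_above_def using assms by (intro psubset_card_mono) auto

lemma rank_above_strict_antimono:
  assumes "finite A" "y \<in> A" "p x < p y"
  shows "rank_above A p y < rank_above A p x"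
  unfolding rank_above_def using assms by (intro psubset_card_mono) auto

lemma inj_on_rank_above:
  assumes "finite A" "inj_on p A"
  shows "inj_on (rank_above A p) A"
proof (rule inj_onI)
  fix x y assume "x \<in> A" "y \<in> A" "rank_above A p x = rank_above A p y"
  then show "x = y"
    using rank_above_strict_antimono[OF \<open>finite A\<close>, of x p y] rank_above_strict_antimono[OF \<open>finite A\<close>, of y p x]
      inj_onD[OF \<open>inj_on p A\<close>] by (metis less_irrefl linorder_neqE_nat)
qed

lemma card_rank_above_in_le:
  assumes "finite A" "inj_on p A" "finite R"
  shows "card {y\<in>A. rank_above A p y \<in> R} \<le> card R"
proof -
  have "inj_on (rank_above A p) {y\<in>A. rank_above A p y \<in> R}"
    using inj_on_rank_above[OF assms(1,2)] by (rule inj_on_subset) auto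
  then show ?thesis using assms(3) by (intro card_inj_on_le) auto
qed

lemma rank_above_le_add_diff:
  assumes "finite A" "inj_on p A" "p y < p x"
  shows "rank_above A p y \<le> rank_above A p x + (p x - p y)"
proof -
  have "{z\<in>A. p y < p z} \<subseteq> {z\<in>A. p x < p z} \<union> {z\<in>A. p y < p z \<and> p z \<le> p x}" by auto
  then have "rank_above A p y \<le> card ({z\<in>A. p x < p z} \<union> {z\<in>A. p y < p z \<and> p z \<le> p x})"
    unfolding rank_above_def using assms(1) by (intro card_mono) auto
  also have "\<dots> \<le> rank_above A p x + card {z\<in>A. p y < p z \<and> p z \<le> p x}"
    unfolding rank_above_def by (rule card_Un_le)
  also have "card {z\<in>A. p y < p z \<and> p z \<le> p x} \<le> card {p y<..p x}"
    using assms(2) by (intro card_inj_on_le) (auto intro: inj_on_subset)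
  finally show ?thesis by simp
qed

section \<open>The square of a theta graph\<close>

locale theta_square =
  fixes ls :: "nat list" and k :: nat
  assumes m_ge_3: "length ls \<ge> 3"
    and len0_ge_2: "ls ! 0 \<ge> 2"
    and len_ge_4: "\<And>i. 1 \<le> i \<Longrightarrow> i < length ls \<Longrightarrow> ls ! i \<ge> 4"
    and k_ge: "k \<ge> length ls + 3"
begin

abbreviation "m \<equiv> length ls"
abbreviation "l i \<equiv> ls ! i"
abbreviation "pt \<equiv> theta_pt ls"
abbreviation "V \<equiv> theta_vertices ls"
abbreviation "E \<equiv> square_adj (theta_adj ls)"

lemma len_ge_2: "i < m \<Longrightarrow> l i \<ge> 2"
  using len0_ge_2 len_ge_4[of i] by (cases "i = 0") auto

lemma len1_ge_4: "l 1 \<ge> 4"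
  using len_ge_4[of 1] m_ge_3 by simp

lemma len2_ge_4: "l 2 \<ge> 4"
  using len_ge_4[of 2] m_ge_3 by simp

lemma k_pos: "0 < k"
  using k_ge by simp

lemma pt_TU[simp]: "pt i a = TU \<longleftrightarrow> a = 0"
  by (auto simp: theta_pt_def)

lemma pt_TW[simp]: "pt i a = TW \<longleftrightarrow> a \<noteq> 0 \<and> a = l i"
  by (auto simp: theta_pt_def)

lemma pt_TV[simp]: "pt i a = TV i' j \<longleftrightarrow> 0 < a \<and> a \<noteq> l i \<and> i = i' \<and> a = j"
  by (auto simp: theta_pt_def)

lemma TU_pt[simp]: "TU = pt i a \<longleftrightarrow> a = 0"
  by (auto simp: theta_pt_def)

lemma TW_pt[simp]: "TW = pt i a \<longleftrightarrow> a \<noteq> 0 \<and> a = l i"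
  by (auto simp: theta_pt_def)

lemma TV_pt[simp]: "TV i' j = pt i a \<longleftrightarrow> 0 < a \<and> a \<noteq> l i \<and> i = i' \<and> a = j"
  by (auto simp: theta_pt_def)

lemma pt_0[simp]: "pt i 0 = TU"
  by (simp add: theta_pt_def)

lemma TV_in_V[simp]: "TV i j \<in> V \<longleftrightarrow> i < m \<and> 1 \<le> j \<and> j < l i"
  by (auto simp: theta_vertices_def)

lemma TU_in_V[simp]: "TU \<in> V"
  by (simp add: theta_vertices_def)

lemma TW_in_V[simp]: "TW \<in> V"
  by (simp add: theta_vertices_def)

lemma finite_V: "finite V"
proof -
  have "V \<subseteq> {TU, TW} \<union> (\<lambda>(i, j). TV i j) ` (SIGMA i:{..<m}. {..<l i})"
    unfolding theta_vertices_def by auto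
  then show ?thesis by (rule finite_subset) auto
qed

lemma E_sym: "E x y \<Longrightarrow> E y x"
  unfolding square_adj_def theta_adj_def by blast

lemma E_irrefl: "\<not> E x x"
  unfolding square_adj_def by blast

lemma pt_eq_pt_cases:
  assumes "i < m" "i' < m" "q \<le> l i" "r \<le> l i'" "pt i q = pt i' r"
  shows "(q = 0 \<and> r = 0) \<or> (q = l i \<and> r = l i') \<or> (i = i' \<and> q = r)"
  using assms len_ge_2[of i] len_ge_2[of i'] by (auto simp: theta_pt_def split: if_splits)

lemma square_adj_cases:
  assumes "E x y"
  shows "(\<exists>i<m. \<exists>a b. a \<le> l i \<and> b \<le> l i \<and> x = pt i a \<and> y = pt i b \<and> a \<noteq> b \<and> a \<le> b + 2 \<and> b \<le> a + 2)
       \<or> (\<exists>i<m. \<exists>i'<m. x = pt i 1 \<and> y = pt i' 1)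
       \<or> (\<exists>i<m. \<exists>i'<m. x = pt i (l i - 1) \<and> y = pt i' (l i' - 1))"
proof -
  from assms have "x \<noteq> y" and adj: "theta_adj ls x y \<or> (\<exists>z. theta_adj ls x z \<and> theta_adj ls z y)"
    unfolding square_adj_def by auto
  have edge: "\<exists>i<m. \<exists>p q. p \<le> l i \<and> q \<le> l i \<and> a = pt i p \<and> b = pt i q \<and> (q = p + 1 \<or> p = q + 1)"
    if "theta_adj ls a b" for a b
    using that unfolding theta_adj_def by (metis Suc_eq_plus1 Suc_leI less_imp_le)
  show ?thesis
  proof (cases "theta_adj ls x y")
    case True
    with edge obtain i p q where "i < m" "p \<le> l i" "q \<le> l i" "x = pt i p" "y = pt i q"
      "q = p + 1 \<or> p = q + 1" by blast
    then show ?thesis by (intro disjI1 exI[of _ i] conjI exI[of _ p] exI[of _ q]) auto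
  next
    case False
    with adj obtain z where xz: "theta_adj ls x z" and zy: "theta_adj ls z y" by blast
    from edge[OF xz] obtain i p q where
      i: "i < m" "p \<le> l i" "q \<le> l i" "x = pt i p" "z = pt i q" "q = p + 1 \<or> p = q + 1"
      by blast
    from edge[OF zy] obtain i' r s where
      i': "i' < m" "r \<le> l i'" "s \<le> l i'" "z = pt i' r" "y = pt i' s" "s = r + 1 \<or> r = s + 1"
      by blast
    from pt_eq_pt_cases[of i i' q r] i i'
    consider "q = 0" "r = 0" | "q = l i" "r = l i'" | "i = i'" "q = r" by auto
    then show ?thesis
    proof cases
      case 1
      then have "p = 1" "s = 1" using i i' by auto
      then show ?thesis using i i' by blast
    next
      case 2
      then have "p = l i - 1" "s = l i' - 1" using i i' by auto
      then show ?thesis using i i' by blast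
    next
      case 3
      then have "p \<noteq> s" using \<open>x \<noteq> y\<close> i i' by auto
      then show ?thesis using i i' 3
        by (intro disjI1 exI[of _ i] conjI exI[of _ p] exI[of _ s]) auto
    qed
  qed
qed

lemma square_adj_TV:
  assumes "E (TV i j) y" "TV i j \<in> V"
  shows "(\<exists>b. b \<le> l i \<and> y = pt i b \<and> b \<noteq> j \<and> b \<le> j + 2 \<and> j \<le> b + 2)
       \<or> (j = 1 \<and> (\<exists>i'<m. y = pt i' 1)) \<or> (j = l i - 1 \<and> (\<exists>i'<m. y = pt i' (l i' - 1)))"
  using square_adj_cases[OF assms(1)]
proof (elim disjE exE conjE)
  fix i0 a b assume h: "i0 < m" "a \<le> l i0" "b \<le> l i0" "TV i j = pt i0 a" "y = pt i0 b"
    "a \<noteq> b" "a \<le> b + 2" "b \<le> a + 2"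
  then have "i0 = i" "a = j" by (metis pt_TV)+
  then show ?thesis using h by blast
next
  fix i0 i' assume "i0 < m" "i' < m" "TV i j = pt i0 1" "y = pt i' 1"
  then show ?thesis by (metis pt_TV)
next
  fix i0 i' assume "i0 < m" "i' < m" "TV i j = pt i0 (l i0 - 1)" "y = pt i' (l i' - 1)"
  then show ?thesis by (metis pt_TV)
qed

lemma square_adj_TU:
  assumes "E TU y"
  shows "\<exists>i<m. y = pt i 1 \<or> y = pt i 2"
  using square_adj_cases[OF assms]
proof (elim disjE exE conjE)
  fix i a b assume "i < m" "TU = pt i a" "y = pt i b" "a \<noteq> b" "b \<le> a + 2"
  then have "b = 1 \<or> b = 2" by auto
  then show ?thesis using \<open>i < m\<close> \<open>y = pt i b\<close> by blast
next
  fix i i' assume "i < m" "TU = pt i (l i - 1)"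
  then show ?thesis using len_ge_2[of i] by simp
qed simp

lemma square_adj_TW:
  assumes "E TW y"
  shows "\<exists>i<m. y = pt i (l i - 1) \<or> y = pt i (l i - 2)"
  using square_adj_cases[OF assms]
proof (elim disjE exE conjE)
  fix i a b assume "i < m" "b \<le> l i" "TW = pt i a" "y = pt i b" "a \<noteq> b" "a \<le> b + 2"
  then have "b = l i - 1 \<or> b = l i - 2" by auto
  then show ?thesis using \<open>i < m\<close> \<open>y = pt i b\<close> by blast
next
  fix i i' assume "i < m" "TW = pt i 1"
  then show ?thesis using len_ge_2[of i] by simp
next
  fix i i' assume "i < m" "TW = pt i (l i - 1)"
  then show ?thesis using len_ge_2[of i] by (cases "l i") auto
qed

definition in_head :: "theta_vertex \<Rightarrow> bool" where
  "in_head x \<longleftrightarrow> x = TU \<or> (\<exists>i. x = TV i 1) \<or> x = TV 1 2 \<or> x = TV 1 3"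

definition in_tail :: "theta_vertex \<Rightarrow> bool" where
  "in_tail x \<longleftrightarrow> \<not> in_head x \<and>
     (x = TW \<or> (\<exists>i. x = TV i (l i - 1)) \<or> x = TV 2 (l 2 - 2) \<or> x = TV 2 (l 2 - 3))"

definition "head = {x\<in>V. in_head x}"
definition "tail = {x\<in>V. in_tail x}"
definition "inner = {x\<in>V. \<not> in_head x \<and> \<not> in_tail x}"

lemma in_head_TV: "in_head (TV i j) \<longleftrightarrow> j = 1 \<or> (i = 1 \<and> (j = 2 \<or> j = 3))"
  by (auto simp: in_head_def)

lemma in_head_pt:
  assumes "i < m" "b \<le> l i"
  shows "in_head (pt i b) \<longleftrightarrow> b = 0 \<or> b = 1 \<or> (i = 1 \<and> (b = 2 \<or> b = 3))"
  using assms len_ge_2[of i] len1_ge_4 by (auto simp: theta_pt_def in_head_def)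

lemma inner_cases:
  assumes "x \<in> inner"
  obtains i j where "x = TV i j" "i < m" "2 \<le> j" "j + 2 \<le> l i"
    "i = 1 \<Longrightarrow> 4 \<le> j" "i = 2 \<Longrightarrow> j + 4 \<le> l 2"
proof -
  have x: "x \<in> V" "\<not> in_head x" "\<not> in_tail x" using assms unfolding inner_def by auto
  have "x \<noteq> TU" "x \<noteq> TW" using x unfolding in_head_def in_tail_def by auto
  then obtain i j where xij: "x = TV i j" by (cases x) auto
  have "i < m" "1 \<le> j" "j < l i" using x xij by auto
  moreover have "j \<noteq> 1" "i = 1 \<Longrightarrow> j \<noteq> 2 \<and> j \<noteq> 3" using x xij unfolding in_head_def by auto
  moreover have "j \<noteq> l i - 1" "i = 2 \<Longrightarrow> j \<noteq> l 2 - 2 \<and> j \<noteq> l 2 - 3"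
    using x xij unfolding in_tail_def by auto
  ultimately show ?thesis using that xij by force
qed

lemma pt_in_innerD:
  assumes "pt i b \<in> inner" "i < m" "b \<le> l i"
  shows "2 \<le> b" "b + 2 \<le> l i" "i = 1 \<Longrightarrow> 4 \<le> b" "i = 2 \<Longrightarrow> b + 4 \<le> l 2"
  using assms len_ge_2[of i] by (auto elim!: inner_cases simp: theta_pt_def split: if_splits)

lemma in_head_pt_1: "i < m \<Longrightarrow> in_head (pt i 1)"
  using len_ge_2[of i] by (simp add: in_head_pt)

lemma last_notin_inner: "i < m \<Longrightarrow> pt i (l i - 1) \<notin> inner"
  using pt_in_innerD(2)[of i "l i - 1"] by fastforce

lemma finite_inner: "finite inner"
  unfolding inner_def using finite_V by simp

lemma square_adj_inner:
  assumes "x \<in> inner" "x = TV i j" "E x y"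
  shows "\<exists>b. b \<le> l i \<and> y = pt i b \<and> b \<noteq> j \<and> b \<le> j + 2 \<and> j \<le> b + 2"
  using assms(1)
proof (rule inner_cases)
  fix i' j' assume "x = TV i' j'" "i' < m" "2 \<le> j'" "j' + 2 \<le> l i'"
  with square_adj_TV[of i j y] assms show ?thesis by auto
qed

lemma inner_degree_le_4:
  assumes "x \<in> inner"
  shows "card {y\<in>V. E x y} \<le> 4"
  using assms
proof (rule inner_cases)
  fix i j assume x: "x = TV i j" "2 \<le> j"
  have "{y\<in>V. E x y} \<subseteq> pt i ` {j - 2, j - 1, j + 1, j + 2}"
  proof
    fix y assume "y \<in> {y\<in>V. E x y}"
    then obtain b where "y = pt i b" "b \<noteq> j" "b \<le> j + 2" "j \<le> b + 2"
      using square_adj_inner[OF assms x(1)] by auto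
    moreover from this have "b \<in> {j - 2, j - 1, j + 1, j + 2}" using x by auto
    ultimately show "y \<in> pt i ` {j - 2, j - 1, j + 1, j + 2}" by blast
  qed
  then have "card {y\<in>V. E x y} \<le> card (pt i ` {j - 2, j - 1, j + 1, j + 2})"
    by (rule card_mono[rotated]) simp
  also have "\<dots> \<le> card {j - 2, j - 1, j + 1, j + 2}" by (rule card_image_le) simp
  also have "\<dots> \<le> 4" by (auto simp: card_insert_if)
  finally show ?thesis .
qed

lemma card_head: "card head = m + 3"
proof -
  have "TV i 1 \<in> V" if "i < m" for i using that len_ge_2[OF that] by simp
  then have "head = {TU, TV 1 2, TV 1 3} \<union> (\<lambda>i. TV i 1) ` {..<m}"
    using len1_ge_4 m_ge_3 unfolding head_def in_head_def by auto
  moreover have "card ((\<lambda>i. TV i 1) ` {..<m}) = m" by (subst card_image) (auto simp: inj_on_def)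
  moreover have "card ({TU, TV 1 2, TV 1 3} \<union> (\<lambda>i. TV i 1) ` {..<m})
      = card {TU, TV 1 2, TV 1 3} + card ((\<lambda>i. TV i 1) ` {..<m})"
    by (rule card_Un_disjoint) auto
  ultimately show ?thesis by simp
qed

lemma card_tail_le: "card tail \<le> m + 3"
proof -
  have "card tail \<le> card ({TW, TV 2 (l 2 - 2), TV 2 (l 2 - 3)} \<union> (\<lambda>i. TV i (l i - 1)) ` {..<m})"
    unfolding tail_def in_tail_def by (rule card_mono) auto
  also have "\<dots> \<le> card {TW, TV 2 (l 2 - 2), TV 2 (l 2 - 3)} + card ((\<lambda>i. TV i (l i - 1)) ` {..<m})"
    by (rule card_Un_le)
  also have "\<dots> \<le> 3 + m"
    using card_image_le[of "{..<m}" "\<lambda>i. TV i (l i - 1)"] by (simp add: card_insert_if)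
  finally show ?thesis by simp
qed

lemma card_V_split: "card V = card head + card tail + card inner"
proof -
  have "V = head \<union> tail \<union> inner" unfolding head_def tail_def inner_def by auto
  moreover have "card (head \<union> tail \<union> inner) = card (head \<union> tail) + card inner"
    by (rule card_Un_disjoint) (auto simp: head_def tail_def inner_def finite_V)
  moreover have "card (head \<union> tail) = card head + card tail"
    by (rule card_Un_disjoint) (auto simp: head_def tail_def in_tail_def finite_V)
  ultimately show ?thesis by simp
qed

text \<open>Inner vertices are ordered path by path; \<open>stride\<close> exceeds every path length.\<close>

definition "stride = sum_list ls + 1"

definition position :: "theta_vertex \<Rightarrow> nat" where
  "position x = (case x of TV i j \<Rightarrow> i * stride + j | _ \<Rightarrow> 0)"

abbreviation "rank \<equiv> rank_above inner position"

lemma len_lt_stride: "i < m \<Longrightarrow> l i < stride"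
  using elem_le_sum_list[of i ls] unfolding stride_def by simp

lemma inj_on_position: "inj_on position inner"
proof (rule inj_onI)
  fix x y assume x: "x \<in> inner" and y: "y \<in> inner" and eq: "position x = position y"
  obtain i j where x_eq: "x = TV i j" and "i < m" "j + 2 \<le> l i" using x by (rule inner_cases)
  then have j: "j < stride" using len_lt_stride[of i] by simp
  obtain i' j' where y_eq: "y = TV i' j'" and "i' < m" "j' + 2 \<le> l i'" using y by (rule inner_cases)
  then have j': "j' < stride" using len_lt_stride[of i'] by simp
  have e: "i * stride + j = i' * stride + j'" using eq unfolding x_eq y_eq position_def by simp
  then have "(i * stride + j) mod stride = (i' * stride + j') mod stride" by simp
  then have "j = j'" using j j' by simp
  with e have "i * stride = i' * stride" by simp
  then have "i = i'" using j by simp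
  then show "x = y" using x_eq y_eq \<open>j = j'\<close> by simp
qed

lemma inner_adj_position:
  assumes "x \<in> inner" "y \<in> inner" "E x y"
  shows "position x \<noteq> position y" "position x \<le> position y + 2" "position y \<le> position x + 2"
proof -
  obtain i j where x: "x = TV i j" using assms(1) by (rule inner_cases)
  obtain b where "y = pt i b" "b \<noteq> j" "b \<le> j + 2" "j \<le> b + 2"
    using square_adj_inner[OF assms(1) x assms(3)] by blast
  moreover from this have "y = TV i b" using assms(2) by (auto elim: inner_cases)
  ultimately show "position x \<noteq> position y" "position x \<le> position y + 2" "position y \<le> position x + 2"
    unfolding x position_def by auto
qed

text \<open>Layer 0 is the head plus the last \<open>spare\<close> inner vertices, layer 1 the tail plus the
  next inner vertices, and every further layer \<open>k\<close> consecutive inner vertices, walking backwards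
  through the inner vertices; \<open>slot\<close> counts from the start of layer 1.\<close>

definition "spare = k - (m + 3)"

definition "slot x = card tail + (rank x - spare)"

definition layer :: "theta_vertex \<Rightarrow> nat" where
  "layer x = (if in_head x then 0 else if in_tail x then 1
     else if rank x < spare then 0 else 1 + slot x div k)"

abbreviation "updeg \<equiv> upper_degree V E layer"
abbreviation "upper_nbrs x \<equiv> {y\<in>V. E x y \<and> layer x < layer y}"

lemma k_eq_spare: "k = m + 3 + spare"
  using k_ge unfolding spare_def by simp

lemma layer_head: "in_head x \<Longrightarrow> layer x = 0"
  by (simp add: layer_def)

lemma layer_tail: "in_tail x \<Longrightarrow> layer x = 1"
  unfolding layer_def in_tail_def by simp

lemma layer_le_1_outside_inner: "y \<in> V \<Longrightarrow> y \<notin> inner \<Longrightarrow> layer y \<le> 1"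
  unfolding layer_def inner_def by auto

lemma layer_inner: "y \<in> inner \<Longrightarrow> layer y = (if rank y < spare then 0 else 1 + slot y div k)"
  unfolding layer_def inner_def by auto

lemma layer_inner_mono:
  assumes "x \<in> inner" "y \<in> inner" "rank y \<le> rank x"
  shows "layer y \<le> layer x"
proof (cases "rank y < spare")
  case False
  then have "slot y div k \<le> slot x div k" using assms(3) unfolding slot_def by (simp add: div_le_mono)
  then show ?thesis using False assms(3) layer_inner[OF assms(1)] layer_inner[OF assms(2)] by simp
qed (use layer_inner[OF assms(2)] in simp)

lemma upper_nbr_of_inner:
  assumes "x \<in> inner" "1 \<le> layer x" "y \<in> upper_nbrs x"
  shows "y \<in> inner" "rank x < rank y" "rank y \<le> rank x + 2"
proof -
  show y: "y \<in> inner" using layer_le_1_outside_inner assms(2,3) by fastforce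
  have "E x y" using assms(3) by simp
  note p = inner_adj_position[OF assms(1) y this]
  have "position y < position x"
  proof (rule ccontr)
    assume "\<not> position y < position x"
    then have "rank y < rank x" using p rank_above_strict_antimono[OF finite_inner y, of position x] by simp
    then show False using layer_inner_mono[OF assms(1) y] assms(3) by simp
  qed
  then show "rank x < rank y" "rank y \<le> rank x + 2"
    using rank_above_strict_antimono[OF finite_inner assms(1), of position y]
      rank_above_le_add_diff[OF finite_inner inj_on_position, of y x] p(2) by simp_all
qed

lemma updeg_le_card: "upper_nbrs x \<subseteq> S \<Longrightarrow> finite S \<Longrightarrow> updeg x \<le> card S"
  unfolding upper_degree_def by (rule card_mono)

lemma upper_nbr_of_head: "in_head x \<Longrightarrow> y \<in> upper_nbrs x \<Longrightarrow> \<not> in_head y"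
  using layer_head[of x] layer_head[of y] by auto

lemma upper_nbr_of_tail: "in_tail x \<Longrightarrow> y \<in> upper_nbrs x \<Longrightarrow> y \<in> inner"
  using layer_tail[of x] layer_le_1_outside_inner[of y] by fastforce

lemma upper_nbr_of_head_TV:
  assumes "in_head (TV i j)" "TV i j \<in> V" "y \<in> upper_nbrs (TV i j)"
  obtains b where "b \<le> l i" "y = pt i b" "\<not> in_head (pt i b)" "b \<noteq> j" "b \<le> j + 2" "j \<le> b + 2"
  | i' where "j = l i - 1" "i' < m" "y = pt i' (l i' - 1)"
proof -
  have not_head: "\<not> in_head y" using upper_nbr_of_head[OF assms(1,3)] .
  have "E (TV i j) y" using assms(3) by simp
  from square_adj_TV[OF this assms(2)] show ?thesis
  proof (elim disjE exE conjE)
    fix b assume "b \<le> l i" "y = pt i b" "b \<noteq> j" "b \<le> j + 2" "j \<le> b + 2"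
    then show ?thesis using that(1) not_head by blast
  next
    fix i' assume "i' < m" "y = pt i' 1"
    then show ?thesis using not_head in_head_pt_1 by blast
  next
    fix i' assume "j = l i - 1" "i' < m" "y = pt i' (l i' - 1)"
    then show ?thesis using that(2) by blast
  qed
qed

lemma upper_nbr_of_tail_TV:
  assumes "in_tail (TV i j)" "TV i j \<in> V" "y \<in> upper_nbrs (TV i j)"
  obtains b where "b \<le> l i" "y = pt i b" "pt i b \<in> inner" "b \<noteq> j" "b \<le> j + 2" "j \<le> b + 2"
proof -
  have inner: "y \<in> inner" using upper_nbr_of_tail[OF assms(1,3)] .
  have "E (TV i j) y" using assms(3) by simp
  from square_adj_TV[OF this assms(2)] show ?thesis
  proof (elim disjE exE conjE)
    fix b assume "b \<le> l i" "y = pt i b" "b \<noteq> j" "b \<le> j + 2" "j \<le> b + 2"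
    then show ?thesis using that inner by blast
  next
    assume "j = 1"
    then show ?thesis using assms(1) unfolding in_tail_def by (simp add: in_head_TV)
  next
    fix i' assume "i' < m" "y = pt i' (l i' - 1)"
    then show ?thesis using inner last_notin_inner by blast
  qed
qed

lemma updeg_TU: "updeg TU \<le> m"
proof -
  have "upper_nbrs TU \<subseteq> (\<lambda>i. pt i 2) ` {..<m}"
  proof
    fix y assume y: "y \<in> upper_nbrs TU"
    then obtain i where "i < m" "y = pt i 1 \<or> y = pt i 2" using square_adj_TU by blast
    then show "y \<in> (\<lambda>i. pt i 2) ` {..<m}"
      using upper_nbr_of_head[OF _ y] in_head_pt_1 by (auto simp: in_head_def)
  qed
  then have "updeg TU \<le> card ((\<lambda>i. pt i 2) ` {..<m})" by (rule updeg_le_card) simp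
  also have "\<dots> \<le> m" using card_image_le[of "{..<m}" "\<lambda>i. pt i 2"] by simp
  finally show ?thesis .
qed

lemma updeg_TV_0_1: "updeg (TV 0 1) \<le> m"
proof -
  have "0 < m" using m_ge_3 by linarith
  then have head: "in_head (TV 0 1)" and V: "TV 0 1 \<in> V" using len0_ge_2 by (simp_all add: in_head_TV)
  show ?thesis
  proof (cases "l 0 = 2")
    case True
    define S where "S = insert (pt 0 2) ((\<lambda>i. pt i (l i - 1)) ` ({..<m} - {0}))"
    have "upper_nbrs (TV 0 1) \<subseteq> S"
    proof
      fix y assume y: "y \<in> upper_nbrs (TV 0 1)"
      from head V y show "y \<in> S"
      proof (rule upper_nbr_of_head_TV)
        fix b assume "b \<le> l 0" "y = pt 0 b" "\<not> in_head (pt 0 b)"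
        then have "b = 2" using True in_head_pt[OF \<open>0 < m\<close>] by auto
        then show ?thesis using \<open>y = pt 0 b\<close> unfolding S_def by simp
      next
        fix i' assume "i' < m" "y = pt i' (l i' - 1)"
        moreover have "\<not> in_head y" using upper_nbr_of_head[OF head y] .
        ultimately show ?thesis using True in_head_pt_1[of 0] unfolding S_def by (cases "i' = 0") auto
      qed
    qed
    then have "updeg (TV 0 1) \<le> card S" by (rule updeg_le_card) (simp add: S_def)
    also have "\<dots> \<le> Suc (card ((\<lambda>i. pt i (l i - 1)) ` ({..<m} - {0})))"
      unfolding S_def by (rule card_insert_le_m1) simp_all
    also have "\<dots> \<le> Suc (card ({..<m} - {0::nat}))" by (simp add: card_image_le)
    also have "\<dots> = m" using \<open>0 < m\<close> by simp
    finally show ?thesis .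
  next
    case False
    have "upper_nbrs (TV 0 1) \<subseteq> {pt 0 2, pt 0 3}"
    proof
      fix y assume y: "y \<in> upper_nbrs (TV 0 1)"
      from head V y show "y \<in> {pt 0 2, pt 0 3}"
      proof (rule upper_nbr_of_head_TV)
        fix b assume "b \<le> l 0" "y = pt 0 b" "\<not> in_head (pt 0 b)" "b \<le> 1 + 2"
        then have "b = 2 \<or> b = 3" using in_head_pt[OF \<open>0 < m\<close>] by auto
        then show ?thesis using \<open>y = pt 0 b\<close> by auto
      next
        assume "1 = l 0 - 1"
        then show ?thesis using False len0_ge_2 by simp
      qed
    qed
    then have "updeg (TV 0 1) \<le> card {pt 0 2, pt 0 3}" by (rule updeg_le_card) simp
    also have "\<dots> \<le> 2" by (simp add: card_insert_if)
    finally show ?thesis using m_ge_3 by simp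
  qed
qed

lemma updeg_TV_1_1: "updeg (TV 1 1) = 0"
proof -
  have head: "in_head (TV 1 1)" and V: "TV 1 1 \<in> V" using m_ge_3 len1_ge_4 by (simp_all add: in_head_TV)
  have "upper_nbrs (TV 1 1) \<subseteq> {}"
  proof
    fix y assume y: "y \<in> upper_nbrs (TV 1 1)"
    from head V y show "y \<in> {}"
    proof (rule upper_nbr_of_head_TV)
      fix b assume "b \<le> l 1" "\<not> in_head (pt 1 b)" "b \<le> 1 + 2"
      then show ?thesis using m_ge_3 by (auto simp: in_head_pt)
    next
      assume "1 = l 1 - 1"
      then show ?thesis using len1_ge_4 by simp
    qed
  qed
  then show ?thesis using updeg_le_card[of "TV 1 1" "{}"] by simp
qed

lemma updeg_TV_1_2: "updeg (TV 1 2) \<le> 1"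
proof -
  have head: "in_head (TV 1 2)" and V: "TV 1 2 \<in> V" using m_ge_3 len1_ge_4 by (simp_all add: in_head_TV)
  have "upper_nbrs (TV 1 2) \<subseteq> {pt 1 4}"
  proof
    fix y assume y: "y \<in> upper_nbrs (TV 1 2)"
    from head V y show "y \<in> {pt 1 4}"
    proof (rule upper_nbr_of_head_TV)
      fix b assume "b \<le> l 1" "y = pt 1 b" "\<not> in_head (pt 1 b)" "b \<le> 2 + 2"
      then have "b = 4" using m_ge_3 by (auto simp: in_head_pt)
      then show ?thesis using \<open>y = pt 1 b\<close> by simp
    next
      assume "2 = l 1 - 1"
      then show ?thesis using len1_ge_4 by simp
    qed
  qed
  then have "updeg (TV 1 2) \<le> card {pt 1 4}" by (rule updeg_le_card) simp
  then show ?thesis by simp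
qed

lemma updeg_TV_1_3: "updeg (TV 1 3) \<le> m"
proof -
  have head: "in_head (TV 1 3)" and V: "TV 1 3 \<in> V" using m_ge_3 len1_ge_4 by (simp_all add: in_head_TV)
  show ?thesis
  proof (cases "l 1 = 4")
    case True
    define S where "S = insert (pt 1 4) ((\<lambda>i. pt i (l i - 1)) ` ({..<m} - {1}))"
    have "upper_nbrs (TV 1 3) \<subseteq> S"
    proof
      fix y assume y: "y \<in> upper_nbrs (TV 1 3)"
      from head V y show "y \<in> S"
      proof (rule upper_nbr_of_head_TV)
        fix b assume "b \<le> l 1" "y = pt 1 b" "\<not> in_head (pt 1 b)" "b \<le> 3 + 2" "3 \<le> b + 2"
        then have "b = 4" using True m_ge_3 by (auto simp: in_head_pt)
        then show ?thesis using \<open>y = pt 1 b\<close> unfolding S_def by simp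
      next
        fix i' assume "i' < m" "y = pt i' (l i' - 1)"
        moreover have "\<not> in_head y" using upper_nbr_of_head[OF head y] .
        ultimately show ?thesis using True m_ge_3 unfolding S_def
          by (cases "i' = 1") (auto simp: in_head_pt)
      qed
    qed
    then have "updeg (TV 1 3) \<le> card S" by (rule updeg_le_card) (simp add: S_def)
    also have "\<dots> \<le> Suc (card ((\<lambda>i. pt i (l i - 1)) ` ({..<m} - {1})))"
      unfolding S_def by (rule card_insert_le_m1) simp_all
    also have "\<dots> \<le> Suc (card ({..<m} - {1::nat}))" by (simp add: card_image_le)
    also have "\<dots> = m" using m_ge_3 by simp
    finally show ?thesis .
  next
    case False
    have "upper_nbrs (TV 1 3) \<subseteq> {pt 1 4, pt 1 5}"
    proof
      fix y assume y: "y \<in> upper_nbrs (TV 1 3)"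
      from head V y show "y \<in> {pt 1 4, pt 1 5}"
      proof (rule upper_nbr_of_head_TV)
        fix b assume "b \<le> l 1" "y = pt 1 b" "\<not> in_head (pt 1 b)" "b \<le> 3 + 2" "3 \<le> b + 2"
        then have "b = 4 \<or> b = 5" using m_ge_3 by (auto simp: in_head_pt)
        then show ?thesis using \<open>y = pt 1 b\<close> by auto
      next
        assume "3 = l 1 - 1"
        then show ?thesis using False len1_ge_4 by simp
      qed
    qed
    then have "updeg (TV 1 3) \<le> card {pt 1 4, pt 1 5}" by (rule updeg_le_card) simp
    also have "\<dots> \<le> 2" by (simp add: card_insert_if)
    finally show ?thesis using m_ge_3 by simp
  qed
qed

lemma updeg_TV_i_1:
  assumes "2 \<le> i" "i < m"
  shows "updeg (TV i 1) \<le> 2"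
proof -
  have li: "l i \<ge> 4" using len_ge_4 assms by simp
  have head: "in_head (TV i 1)" and V: "TV i 1 \<in> V" using assms li by (simp_all add: in_head_TV)
  have "upper_nbrs (TV i 1) \<subseteq> {pt i 2, pt i 3}"
  proof
    fix y assume y: "y \<in> upper_nbrs (TV i 1)"
    from head V y show "y \<in> {pt i 2, pt i 3}"
    proof (rule upper_nbr_of_head_TV)
      fix b assume "b \<le> l i" "y = pt i b" "\<not> in_head (pt i b)" "b \<le> 1 + 2"
      then have "b = 2 \<or> b = 3" using assms by (auto simp: in_head_pt)
      then show ?thesis using \<open>y = pt i b\<close> by auto
    next
      assume "1 = l i - 1"
      then show ?thesis using li by simp
    qed
  qed
  then have "updeg (TV i 1) \<le> card {pt i 2, pt i 3}" by (rule updeg_le_card) simp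
  also have "\<dots> \<le> 2" by (simp add: card_insert_if)
  finally show ?thesis .
qed

lemma in_tail_last: "i < m \<Longrightarrow> \<not> in_head (TV i (l i - 1)) \<Longrightarrow> in_tail (TV i (l i - 1))"
  unfolding in_tail_def by blast

lemma updeg_last:
  assumes "i < m" "\<not> in_head (TV i (l i - 1))"
  shows "updeg (TV i (l i - 1)) \<le> (if i = 2 then 0 else 2)"
proof -
  have tail: "in_tail (TV i (l i - 1))" and V: "TV i (l i - 1) \<in> V"
    using in_tail_last[OF assms] assms(1) len_ge_2[OF assms(1)] by auto
  have "upper_nbrs (TV i (l i - 1)) \<subseteq> (if i = 2 then {} else {pt i (l i - 3), pt i (l i - 2)})"
  proof
    fix y assume "y \<in> upper_nbrs (TV i (l i - 1))"
    with tail V show "y \<in> (if i = 2 then {} else {pt i (l i - 3), pt i (l i - 2)})"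
    proof (rule upper_nbr_of_tail_TV)
      fix b assume "b \<le> l i" "y = pt i b" "pt i b \<in> inner" "l i - 1 \<le> b + 2"
      moreover note pt_in_innerD[OF \<open>pt i b \<in> inner\<close> assms(1) \<open>b \<le> l i\<close>]
      ultimately have "i \<noteq> 2" "b = l i - 3 \<or> b = l i - 2" by (fastforce, linarith)
      then show ?thesis using \<open>y = pt i b\<close> by auto
    qed
  qed
  then have "updeg (TV i (l i - 1)) \<le> card (if i = 2 then {} else {pt i (l i - 3), pt i (l i - 2)})"
    by (rule updeg_le_card) simp
  also have "\<dots> \<le> (if i = 2 then 0 else 2)" by (simp add: card_insert_if)
  finally show ?thesis .
qed

lemma updeg_TV_2_2: "updeg (TV 2 (l 2 - 2)) \<le> 1"
proof -
  have tail: "in_tail (TV 2 (l 2 - 2))" and V: "TV 2 (l 2 - 2) \<in> V"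
    using len2_ge_4 m_ge_3 by (auto simp: in_tail_def in_head_TV)
  have "upper_nbrs (TV 2 (l 2 - 2)) \<subseteq> {pt 2 (l 2 - 4)}"
  proof
    fix y assume "y \<in> upper_nbrs (TV 2 (l 2 - 2))"
    with tail V show "y \<in> {pt 2 (l 2 - 4)}"
    proof (rule upper_nbr_of_tail_TV)
      fix b assume "b \<le> l 2" "y = pt 2 b" "pt 2 b \<in> inner" "l 2 - 2 \<le> b + 2"
      moreover have "b + 4 \<le> l 2" using pt_in_innerD(4)[OF \<open>pt 2 b \<in> inner\<close>] m_ge_3 \<open>b \<le> l 2\<close> by simp
      ultimately have "b = l 2 - 4" by linarith
      then show ?thesis using \<open>y = pt 2 b\<close> by simp
    qed
  qed
  then have "updeg (TV 2 (l 2 - 2)) \<le> card {pt 2 (l 2 - 4)}" by (rule updeg_le_card) simp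
  then show ?thesis by simp
qed

lemma updeg_TV_2_3:
  assumes "in_tail (TV 2 (l 2 - 3))"
  shows "updeg (TV 2 (l 2 - 3)) \<le> 2"
proof -
  have V: "TV 2 (l 2 - 3) \<in> V" using assms len2_ge_4 m_ge_3 by (auto simp: in_tail_def in_head_TV)
  have "upper_nbrs (TV 2 (l 2 - 3)) \<subseteq> {pt 2 (l 2 - 5), pt 2 (l 2 - 4)}"
  proof
    fix y assume "y \<in> upper_nbrs (TV 2 (l 2 - 3))"
    with assms V show "y \<in> {pt 2 (l 2 - 5), pt 2 (l 2 - 4)}"
    proof (rule upper_nbr_of_tail_TV)
      fix b assume "b \<le> l 2" "y = pt 2 b" "pt 2 b \<in> inner" "l 2 - 3 \<le> b + 2"
      moreover have "b + 4 \<le> l 2" using pt_in_innerD(4)[OF \<open>pt 2 b \<in> inner\<close>] m_ge_3 \<open>b \<le> l 2\<close> by simp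
      ultimately have "b = l 2 - 5 \<or> b = l 2 - 4" by linarith
      then show ?thesis using \<open>y = pt 2 b\<close> by auto
    qed
  qed
  then have "updeg (TV 2 (l 2 - 3)) \<le> card {pt 2 (l 2 - 5), pt 2 (l 2 - 4)}" by (rule updeg_le_card) simp
  also have "\<dots> \<le> 2" by (simp add: card_insert_if)
  finally show ?thesis .
qed

lemma updeg_TW: "updeg TW \<le> m"
proof -
  have "upper_nbrs TW \<subseteq> (\<lambda>i. pt i (l i - 2)) ` {..<m}"
  proof
    fix y assume y: "y \<in> upper_nbrs TW"
    have "y \<in> inner" using upper_nbr_of_tail[OF _ y] by (simp add: in_tail_def in_head_def)
    moreover obtain i where "i < m" "y = pt i (l i - 1) \<or> y = pt i (l i - 2)" using y square_adj_TW by blast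
    ultimately show "y \<in> (\<lambda>i. pt i (l i - 2)) ` {..<m}" using last_notin_inner by auto
  qed
  then have "updeg TW \<le> card ((\<lambda>i. pt i (l i - 2)) ` {..<m})" by (rule updeg_le_card) simp
  also have "\<dots> \<le> m" using card_image_le[of "{..<m}" "\<lambda>i. pt i (l i - 2)"] by simp
  finally show ?thesis .
qed

lemma updeg_inner_le_4: "x \<in> inner \<Longrightarrow> updeg x \<le> 4"
  using updeg_le_card[of x "{y\<in>V. E x y}"] inner_degree_le_4 finite_V by force

lemma updeg_inner_le_2:
  assumes "x \<in> inner" "1 \<le> layer x"
  shows "updeg x \<le> 2"
proof -
  have "updeg x \<le> card {y\<in>inner. rank y \<in> {rank x + 1, rank x + 2}}"
    using upper_nbr_of_inner[OF assms] finite_inner by (intro updeg_le_card) force+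
  also have "\<dots> \<le> card {rank x + 1, rank x + 2}"
    by (rule card_rank_above_in_le[OF finite_inner inj_on_position]) simp
  also have "\<dots> \<le> 2" by (simp add: card_insert_if)
  finally show ?thesis .
qed

lemma upper_nbr_of_inner_close:
  assumes "x \<in> inner" "1 \<le> layer x" "1 \<le> updeg x"
  obtains y where "y \<in> inner" "rank x < rank y" "rank y + updeg x \<le> rank x + 3" "layer x < layer y"
proof (cases "updeg x = 1")
  case True
  have "upper_nbrs x \<noteq> {}" using assms(3) unfolding upper_degree_def by (metis card.empty not_one_le_zero)
  then obtain y where "y \<in> upper_nbrs x" by blast
  then show ?thesis using that upper_nbr_of_inner[OF assms(1,2)] True by force
next
  case False
  have "\<exists>y\<in>upper_nbrs x. rank y = rank x + 1"
  proof (rule ccontr)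
    assume "\<not> ?thesis"
    then have "upper_nbrs x \<subseteq> {y\<in>inner. rank y \<in> {rank x + 2}}"
      using upper_nbr_of_inner[OF assms(1,2)] by (force simp: le_Suc_eq)
    then have "updeg x \<le> card {y\<in>inner. rank y \<in> {rank x + 2}}"
      using finite_inner by (intro updeg_le_card) auto
    also have "\<dots> \<le> 1"
      using card_rank_above_in_le[OF finite_inner inj_on_position, of "{rank x + 2}"] by simp
    finally show False using assms(3) False by simp
  qed
  then show ?thesis using that upper_nbr_of_inner[OF assms(1,2)] updeg_inner_le_2[OF assms(1,2)] by force
qed

lemma layer_0_cases:
  assumes "y \<in> V" "layer y = 0"
  shows "in_head y \<or> (y \<in> inner \<and> rank y < spare)"
  using assms unfolding layer_def inner_def by (auto split: if_splits)

lemma layer_1_cases: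
  assumes "y \<in> V" "layer y = 1"
  shows "in_tail y \<or> (y \<in> inner \<and> spare \<le> rank y \<and> slot y < k)"
proof -
  have "\<not> in_head y" using assms layer_head by fastforce
  moreover have "y \<in> inner \<Longrightarrow> \<not> in_tail y \<Longrightarrow> spare \<le> rank y \<and> slot y < k"
    using assms(2) layer_inner[of y] k_pos by (auto split: if_splits simp: div_eq_0_iff)
  ultimately show ?thesis using assms(1) unfolding inner_def by blast
qed

lemma layer_inner_high: "x \<in> inner \<Longrightarrow> spare \<le> rank x \<Longrightarrow> layer x = 1 + slot x div k"
  using layer_inner[of x] by simp

lemma high_layer_cases:
  assumes "y \<in> V" "layer y = t" "2 \<le> t"
  shows "y \<in> inner" "spare \<le> rank y" "(t - 1) * k \<le> slot y" "slot y < t * k"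
proof -
  show y: "y \<in> inner" using layer_le_1_outside_inner[OF assms(1)] assms(2,3) by fastforce
  show r: "spare \<le> rank y" using layer_inner[OF y] assms(2,3) by (auto split: if_splits)
  have "slot y div k = t - 1" using layer_inner_high[OF y r] assms(2,3) by simp
  then show "(t - 1) * k \<le> slot y" "slot y < t * k"
    using div_times_less_eq_dividend[of "slot y" k] div_less_iff_less_mult[OF k_pos, of "slot y" t] assms(3)
    by simp_all
qed

lemma card_slot_range: "card {x\<in>inner. spare \<le> rank x \<and> a \<le> slot x \<and> slot x < b} \<le> b - a"
proof -
  have "inj_on slot {x\<in>inner. spare \<le> rank x}"
    using inj_onD[OF inj_on_rank_above[OF finite_inner inj_on_position]]
    unfolding slot_def by (intro inj_onI) auto
  then have "card {x\<in>inner. spare \<le> rank x \<and> a \<le> slot x \<and> slot x < b} \<le> card {a..<b}"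
    by (intro card_inj_on_le) (auto intro: inj_on_subset)
  then show ?thesis by simp
qed

lemma card_low_rank_le: "card {x\<in>inner. rank x < spare} \<le> spare"
  using card_rank_above_in_le[OF finite_inner inj_on_position, of "{..<spare}"] by simp

lemma card_layer_1_le: "card {y\<in>V. layer y = 1} \<le> k"
proof -
  define S where "S = {x\<in>inner. spare \<le> rank x \<and> card tail \<le> slot x \<and> slot x < k}"
  have "{y\<in>V. layer y = 1} \<subseteq> tail \<union> S"
    using layer_1_cases unfolding tail_def slot_def S_def by auto
  then have "card {y\<in>V. layer y = 1} \<le> card (tail \<union> S)"
    by (rule card_mono[rotated]) (simp add: tail_def S_def finite_inner finite_V)
  also have "\<dots> \<le> card tail + card S" by (rule card_Un_le)
  also have "\<dots> \<le> k" using card_slot_range[of "card tail" k] card_tail_le k_ge unfolding S_def by simp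
  finally show ?thesis .
qed

lemma card_layer_le: "card {v\<in>V. layer v = t} \<le> k"
proof -
  consider "t = 0" | "t = 1" | "2 \<le> t" by linarith
  then show ?thesis
  proof cases
    case 1
    have "{v\<in>V. layer v = t} \<subseteq> head \<union> {x\<in>inner. rank x < spare}"
      using layer_0_cases 1 unfolding head_def by auto
    then have "card {v\<in>V. layer v = t} \<le> card (head \<union> {x\<in>inner. rank x < spare})"
      by (rule card_mono[rotated]) (simp add: head_def finite_V finite_inner)
    also have "\<dots> \<le> card head + card {x\<in>inner. rank x < spare}" by (rule card_Un_le)
    also have "\<dots> \<le> k" using card_head card_low_rank_le k_eq_spare by simp
    finally show ?thesis .
  next
    case 2
    then show ?thesis using card_layer_1_le by simp
  next
    case 3
    have "{v\<in>V. layer v = t} \<subseteq> {x\<in>inner. spare \<le> rank x \<and> (t - 1) * k \<le> slot x \<and> slot x < t * k}"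
      using high_layer_cases 3 by auto
    then have "card {v\<in>V. layer v = t} \<le> card {x\<in>inner. spare \<le> rank x \<and> (t - 1) * k \<le> slot x \<and> slot x < t * k}"
      by (rule card_mono[rotated]) (simp add: finite_inner)
    also have "\<dots> \<le> t * k - (t - 1) * k" by (rule card_slot_range)
    also have "\<dots> = k" using 3 by (simp add: diff_mult_distrib)
    finally show ?thesis .
  qed
qed

lemma k_mult_layer_lt_card:
  assumes "k < card V" "v \<in> V"
  shows "k * layer v < card V"
proof (cases "v \<in> inner \<and> spare \<le> rank v")
  case True
  have "card V = m + 3 + card tail + card inner"
    using card_V_split card_head by simp
  moreover have "rank v < card inner" using rank_above_lt_card[OF finite_inner] True by simp
  ultimately have "k + slot v < card V" using True k_eq_spare unfolding slot_def by simp
  moreover have "k * (slot v div k) \<le> slot v" by simp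
  moreover have "k * (1 + slot v div k) = k + k * (slot v div k)" by simp
  ultimately have "k * (1 + slot v div k) < card V" by linarith
  then show ?thesis using layer_inner_high True by simp
next
  case False
  then have "layer v \<le> 1"
    using layer_inner layer_le_1_outside_inner assms(2) by (cases "v \<in> inner") auto
  then show ?thesis using assms(1) by (metis le_less_trans mult.right_neutral mult_le_mono2)
qed

lemma layer_0_updeg_cases:
  assumes "y \<in> V" "layer y = 0"
  shows "y \<in> {TU, TV 0 1, TV 1 3} \<and> updeg y \<le> m
    \<or> y \<in> (\<lambda>i. TV i 1) ` {2..<m} \<and> updeg y \<le> 2
    \<or> y = TV 1 2 \<and> updeg y \<le> 1
    \<or> y = TV 1 1 \<and> updeg y = 0
    \<or> y \<in> {x\<in>inner. rank x < spare} \<and> updeg y \<le> 4"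
  using layer_0_cases[OF assms]
proof
  assume "in_head y"
  then consider "y = TU" | "y = TV 1 2" | "y = TV 1 3" | i where "y = TV i 1"
    unfolding in_head_def by blast
  then show ?thesis
  proof cases
    case (4 i)
    then have "i < m" using assms(1) by simp
    then consider "i = 0" | "i = 1" | "2 \<le> i" by linarith
    then show ?thesis
      using 4 updeg_TV_0_1 updeg_TV_1_1 updeg_TV_i_1[OF _ \<open>i < m\<close>] \<open>i < m\<close> by cases auto
  qed (use updeg_TU updeg_TV_1_2 updeg_TV_1_3 in auto)
qed (use updeg_inner_le_4 in auto)

lemma room_layer_0:
  assumes "v \<in> V" "layer v = 0" "1 \<le> updeg v"
  shows "card {y\<in>V. layer y = layer v \<and> updeg v \<le> updeg y} + updeg v \<le> k"
proof -
  define j where "j = updeg v"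
  define A where "A = (if j \<le> m then {TU, TV 0 1, TV 1 3} else {})"
  define B where "B = (if j \<le> 2 then (\<lambda>i. TV i 1) ` {2..<m} else {})"
  define C where "C = (if j \<le> 1 then {TV 1 2} else {})"
  define D where "D = (if j \<le> 4 then {x\<in>inner. rank x < spare} else {})"
  have j: "1 \<le> j" using assms(3) unfolding j_def .
  have sub: "{y\<in>V. layer y = layer v \<and> updeg v \<le> updeg y} \<subseteq> A \<union> B \<union> C \<union> D"
  proof
    fix y assume "y \<in> {y\<in>V. layer y = layer v \<and> updeg v \<le> updeg y}"
    then have "y \<in> V" "layer y = 0" "j \<le> updeg y" using assms(2) unfolding j_def by auto
    then show "y \<in> A \<union> B \<union> C \<union> D"
      using layer_0_updeg_cases[of y] j unfolding A_def B_def C_def D_def by auto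
  qed
  have "card {y\<in>V. layer y = layer v \<and> updeg v \<le> updeg y} \<le> card (A \<union> B \<union> C \<union> D)"
    using sub finite_inner by (intro card_mono) (auto simp: A_def B_def C_def D_def)
  also have "\<dots> \<le> card A + card B + card C + card D"
    using card_Un_le[of "A \<union> B \<union> C" D] card_Un_le[of "A \<union> B" C] card_Un_le[of A B] by linarith
  also have "\<dots> \<le> (if j \<le> m then 3 else 0) + (if j \<le> 2 then m - 2 else 0) + (if j \<le> 1 then 1 else 0)
      + (if j \<le> 4 then spare else 0)"
    using card_image_le[of "{2..<m}" "\<lambda>i. TV i 1"] card_low_rank_le
    unfolding A_def B_def C_def D_def by (intro add_mono) (auto simp: card_insert_if)
  finally have "card {y\<in>V. layer y = layer v \<and> updeg v \<le> updeg y} \<le> \<dots>" .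
  moreover have "j \<le> m \<or> j \<le> 4"
    using sub assms(1,2) unfolding A_def B_def C_def D_def j_def by (auto split: if_splits)
  ultimately show ?thesis using j m_ge_3 k_eq_spare unfolding j_def by (auto split: if_splits)
qed

lemma updeg_layer_1_le_2:
  assumes "y \<in> V" "layer y = 1" "y \<noteq> TW"
  shows "updeg y \<le> 2"
  using layer_1_cases[OF assms(1,2)]
proof
  assume tail: "in_tail y"
  then consider i where "y = TV i (l i - 1)" | "y = TV 2 (l 2 - 2)" | "y = TV 2 (l 2 - 3)"
    using assms(3) unfolding in_tail_def by blast
  then show ?thesis
  proof cases
    case (1 i)
    then have "i < m" "\<not> in_head (TV i (l i - 1))" using assms(1) tail unfolding in_tail_def by auto
    then show ?thesis using updeg_last 1 by (metis le_zero_eq nat_le_linear)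
  qed (use tail updeg_TV_2_2 updeg_TV_2_3 in auto)
qed (use updeg_inner_le_2 assms(2) in auto)

text \<open>In layer 1, the last inner vertex of path 2 has no upper neighbour and the one before
  it at most one, which makes room for the degree of any other vertex of the layer.\<close>

lemma room_layer_1:
  assumes "v \<in> V" "layer v = 1" "1 \<le> updeg v"
  shows "card {y\<in>V. layer y = layer v \<and> updeg v \<le> updeg y} + updeg v \<le> k"
proof -
  define M where "M = {y\<in>V. layer y = 1}"
  define a where "a = TV 2 (l 2 - 1)"
  define b where "b = TV 2 (l 2 - 2)"
  have tail: "in_tail a" "in_tail b"
    using len2_ge_4 m_ge_3 unfolding a_def b_def by (auto simp: in_tail_def in_head_TV)
  have "a \<in> M" "b \<in> M" "a \<noteq> b"
    using tail len2_ge_4 m_ge_3 layer_tail unfolding M_def a_def b_def by auto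
  have "updeg a = 0" "updeg b \<le> 1"
    using updeg_last[of 2] updeg_TV_2_2 tail m_ge_3 unfolding a_def b_def in_tail_def by auto
  have finM: "finite M" and cM: "card M \<le> k"
    unfolding M_def using finite_V card_layer_1_le by simp_all
  consider "updeg v = 1" | "updeg v = 2" | "3 \<le> updeg v" using assms(3) by linarith
  then show ?thesis
  proof cases
    case 1
    have "{y\<in>V. layer y = layer v \<and> updeg v \<le> updeg y} \<subseteq> M - {a}"
      using assms(2) 1 \<open>updeg a = 0\<close> unfolding M_def by auto
    then have "card {y\<in>V. layer y = layer v \<and> updeg v \<le> updeg y} \<le> card (M - {a})"
      using finM by (intro card_mono) auto
    then show ?thesis using 1 cM \<open>a \<in> M\<close> finM card_Diff1_less[OF finM \<open>a \<in> M\<close>] by linarith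
  next
    case 2
    have "{y\<in>V. layer y = layer v \<and> updeg v \<le> updeg y} \<subseteq> M - {a, b}"
      using assms(2) 2 \<open>updeg a = 0\<close> \<open>updeg b \<le> 1\<close> unfolding M_def by auto
    then have "card {y\<in>V. layer y = layer v \<and> updeg v \<le> updeg y} \<le> card (M - {a, b})"
      using finM by (intro card_mono) auto
    also have "\<dots> = card M - 2" using \<open>a \<in> M\<close> \<open>b \<in> M\<close> \<open>a \<noteq> b\<close> finM by (simp add: card_Diff_subset)
    moreover have "2 \<le> card M"
      using card_mono[OF finM, of "{a, b}"] \<open>a \<in> M\<close> \<open>b \<in> M\<close> \<open>a \<noteq> b\<close> by simp
    ultimately show ?thesis using 2 cM by linarith
  next
    case 3
    then have "v = TW" using updeg_layer_1_le_2[OF assms(1,2)] by fastforce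
    have "{y\<in>V. layer y = layer v \<and> updeg v \<le> updeg y} \<subseteq> {TW}"
      using updeg_layer_1_le_2 assms(2) 3 by fastforce
    then have "card {y\<in>V. layer y = layer v \<and> updeg v \<le> updeg y} \<le> 1"
      using card_mono[of "{TW}"] by fastforce
    then show ?thesis using \<open>v = TW\<close> updeg_TW k_ge by simp
  qed
qed

text \<open>An upper neighbour of a vertex in a layer \<open>t \<ge> 2\<close> has higher rank within distance
  two, so a vertex with large upper degree must sit near the end of its layer.\<close>

lemma slot_ge_if_upper_nbr:
  assumes "x \<in> V" "layer x = t" "2 \<le> t" "1 \<le> updeg x"
  shows "t * k + updeg x \<le> slot x + 3"
proof -
  have x: "x \<in> inner" "spare \<le> rank x" using high_layer_cases[OF assms(1-3)] by auto
  obtain y where y: "y \<in> inner" "rank x < rank y" "rank y + updeg x \<le> rank x + 3" "layer x < layer y"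
    using upper_nbr_of_inner_close[OF x(1) _ assms(4)] assms(2,3) by auto
  have "spare \<le> rank y" using x y by simp
  then have "t < 1 + slot y div k" using y(4) layer_inner_high[OF y(1)] assms(2) by simp
  then have "t * k \<le> slot y div k * k" by simp
  also have "\<dots> \<le> slot y" by (rule div_times_less_eq_dividend)
  finally show ?thesis using x(2) y(2,3) unfolding slot_def by simp
qed

lemma room_high_layer:
  assumes "v \<in> V" "layer v = t" "2 \<le> t" "1 \<le> updeg v"
  shows "card {y\<in>V. layer y = layer v \<and> updeg v \<le> updeg y} + updeg v \<le> k"
proof -
  define d where "d = updeg v"
  have "d \<le> 2" using high_layer_cases[OF assms(1-3)] updeg_inner_le_2[of v] assms(2,3) unfolding d_def by simp
  have "{y\<in>V. layer y = layer v \<and> updeg v \<le> updeg y}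
      \<subseteq> {x\<in>inner. spare \<le> rank x \<and> t * k + d - 3 \<le> slot x \<and> slot x < t * k}"
  proof
    fix y assume y: "y \<in> {y\<in>V. layer y = layer v \<and> updeg v \<le> updeg y}"
    then have "t * k + d \<le> slot y + 3"
      using slot_ge_if_upper_nbr[of y t] assms unfolding d_def by fastforce
    then show "y \<in> {x\<in>inner. spare \<le> rank x \<and> t * k + d - 3 \<le> slot x \<and> slot x < t * k}"
      using high_layer_cases[of y t] y assms by auto
  qed
  then have "card {y\<in>V. layer y = layer v \<and> updeg v \<le> updeg y}
      \<le> card {x\<in>inner. spare \<le> rank x \<and> t * k + d - 3 \<le> slot x \<and> slot x < t * k}"
    by (rule card_mono[rotated]) (simp add: finite_inner)
  also have "\<dots> \<le> t * k - (t * k + d - 3)" by (rule card_slot_range)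
  finally show ?thesis using \<open>d \<le> 2\<close> k_ge m_ge_3 unfolding d_def by linarith
qed

lemma room_layer:
  assumes "v \<in> V"
  shows "card {y\<in>V. layer y = layer v \<and> updeg v \<le> updeg y} + updeg v \<le> k"
proof (cases "updeg v = 0")
  case True
  then show ?thesis using card_layer_le[of "layer v"] by simp
next
  case False
  then consider "layer v = 0" | "layer v = 1" | "2 \<le> layer v" by linarith
  then show ?thesis
  proof cases
    case 1
    then show ?thesis using room_layer_0[OF assms] False by simp
  next
    case 2
    then show ?thesis using room_layer_1[OF assms] False by simp
  next
    case 3
    then show ?thesis using room_high_layer[OF assms refl] False by simp
  qed
qed

theorem equitably_choosable_square: "equitably_choosable V E k TYPE('c)"
  unfolding equitably_choosable_def
proof (intro allI impI)
  fix L :: "theta_vertex \<Rightarrow> 'c set"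
  assume L: "k_assignment V k L"
  have "0 < card V" using finite_V TU_in_V card_gt_0_iff by blast
  show "\<exists>f. equitable_L_coloring V E k L f"
  proof (cases "card V \<le> k")
    case True
    have "upper_degree V E (\<lambda>_. 0::nat) v = 0" for v by (simp add: upper_degree_def)
    then show ?thesis
      using equitable_coloring_by_layers[where V = V and E = E, OF finite_V k_pos E_sym E_irrefl L,
          where c = "\<lambda>_. 0"] True \<open>0 < card V\<close> by simp
  next
    case False
    then show ?thesis
      using equitable_coloring_by_layers[where V = V and E = E,
          OF finite_V k_pos E_sym E_irrefl L k_mult_layer_lt_card room_layer] by simp
  qed
qed

end

theorem theorem3p2:
  fixes ls :: "nat list" and k :: nat
  assumes "length ls \<ge> 3"
    and "sorted ls"
    and "ls ! 0 \<ge> 2"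
    and "ls ! 1 \<ge> 4"
    and "k \<ge> length ls + 3"
  shows "equitably_choosable (theta_vertices ls) (square_adj (theta_adj ls)) k TYPE('c)"
proof -
  have "ls ! i \<ge> 4" if "1 \<le> i" "i < length ls" for i
    using assms(4) sorted_nth_mono[OF assms(2) that] by simp
  then interpret theta_square ls k using assms by unfold_locales auto
  show ?thesis by (rule equitably_choosable_square)
qed

end
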